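(* Let $n$ and $k\geq 2$ be positive integers, let $P=(p_1,\dots,p_k)$ be a probability distribution on $\{1,\dots,k\}$, let $X=(X_1,\dots,X_k)$ be multinomially distributed with $n$ samples and probabilities $P$, and let $V_{n,k,P}=D\big((X_1/n,\dots,X_k/n)\,\|\,(p_1,\dots,p_k)\big)$. Then for all real $\varepsilon>\frac{k-1}{n}$, \[ \Pr\big[V_{n,k,P}\geq \varepsilon\big]\leq e^{-n\varepsilon}\cdot\left(\frac{e\varepsilon n}{k-1}\right)^{k-1}. \]
   Context: For probability distributions $(q_1,\dots,q_k)$ and $(p_1,\dots,p_k)$ on a finite set, the Kullback--Leibler divergence is $D\big((q_1,\dots,q_k)\,\|\,(p_1,\dots,p_k)\big)=\sum_{i=1}^k q_i\log\frac{q_i}{p_i}$, with natural logarithm and the usual conventions $0\log(0/p)=0$. The quantity $V_{n,k,P}$ is the divergence from $P$ to the empirical distribution of $n$ i.i.d. samples from $P$. *)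

theory Defs
  imports "HOL-Analysis.Analysis"
begin

definition count_vectors :: "nat \<Rightarrow> nat \<Rightarrow> (nat \<Rightarrow> nat) set" where
  "count_vectors n k = {x. (\<forall>i. i \<notin> {1..k} \<longrightarrow> x i = 0) \<and> (\<Sum>i=1..k. x i) = n}"

definition multinomial_pmf :: "nat \<Rightarrow> nat \<Rightarrow> (nat \<Rightarrow> real) \<Rightarrow> (nat \<Rightarrow> nat) \<Rightarrow> real" where
  "multinomial_pmf n k p x =
     fact n / (\<Prod>i=1..k. fact (x i)) * (\<Prod>i=1..k. p i ^ x i)"

definition KL_div :: "nat \<Rightarrow> (nat \<Rightarrow> real) \<Rightarrow> (nat \<Rightarrow> real) \<Rightarrow> real" where
  "KL_div k q p = (\<Sum>i=1..k. if q i = 0 then 0 else q i * ln (q i / p i))"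

definition V_stat :: "nat \<Rightarrow> nat \<Rightarrow> (nat \<Rightarrow> real) \<Rightarrow> (nat \<Rightarrow> nat) \<Rightarrow> real" where
  "V_stat n k p x = KL_div k (\<lambda>i. real (x i) / real n) p"

definition prob_V_ge :: "nat \<Rightarrow> nat \<Rightarrow> (nat \<Rightarrow> real) \<Rightarrow> real \<Rightarrow> real" where
  "prob_V_ge n k p eps =
     (\<Sum>x\<in>count_vectors n k. if V_stat n k p x \<ge> eps then multinomial_pmf n k p x else 0)"

end

theory Submission
  imports Defs
begin

text \<open>By the Chernoff bound, Pr[V \<ge> \<epsilon>] \<le> e^(-tn\<epsilon>) E[e^(tnV)] for every 0 \<le> t < 1.
  Writing e^(tnV) as the product of the factors (X_i / (n p_i))^(t X_i) and applying weighted
  AM-GM to each of them, E[e^(tnV)] is at most the sum over all count vectors x of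
  n!/\<Prod>x_i! \<Prod>(a_i + z x_i)^(x_i), where a_i = (1 - t) p_i and z = t/n.  Abel's multinomial
  identity evaluates this sum as \<Sum>_j C(j+k-2, j) n!/(n-j)! z^j (\<Sum>a_i + nz)^(n-j).  Since
  \<Sum>a_i + nz = 1 and n!/(n-j)! \<le> n^j, it is at most \<Sum>_j C(j+k-2, j) t^j \<le> (1 - t)^(-(k-1)).
  The choice t = 1 - (k-1)/(n\<epsilon>) gives the bound.\<close>

subsection \<open>Abel's binomial identity\<close>

definition falling_fact :: "nat \<Rightarrow> nat \<Rightarrow> real" where
  "falling_fact N l = (if l \<le> N then fact N / fact (N - l) else 0)"

lemma falling_fact_le_power: "falling_fact N l \<le> real N ^ l"
proof (cases "l \<le> N")
  case True
  have "fact (N - l) dvd (fact N :: nat)"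
    using True by (simp add: fact_dvd)
  then have "falling_fact N l = real (fact N div fact (N - l))"
    using True by (simp add: falling_fact_def real_of_nat_div)
  also have "\<dots> \<le> real (N ^ l)"
    by (intro of_nat_mono fact_div_fact_le_pow True)
  finally show ?thesis by simp
qed (simp add: falling_fact_def)

lemma falling_fact_Suc:
  assumes "l \<le> N"
  shows "falling_fact (Suc N) l * real (Suc N - l) = real (Suc N) * falling_fact N l"
proof -
  obtain d where d: "N = l + d"
    using assms le_Suc_ex by blast
  then have "Suc N - l = Suc d" "N - l = d"
    by auto
  then show ?thesis
    using assms by (simp add: falling_fact_def)
qed

lemma falling_fact_add:
  "j \<le> N \<Longrightarrow> falling_fact N j * falling_fact (N - j) l = falling_fact N (j + l)"
  by (auto simp: falling_fact_def)

lemma binomial_mult_falling_fact: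
  assumes "m \<le> N" "j \<le> N"
  shows "real (N choose m) * falling_fact (N - m) j = falling_fact N j * real ((N - j) choose m)"
proof (cases "m \<le> N - j")
  case True
  then show ?thesis
    using assms by (simp add: falling_fact_def binomial_fact field_simps)
next
  case False
  then have "\<not> j \<le> N - m"
    using assms by arith
  then show ?thesis
    using False by (simp add: falling_fact_def)
qed

lemma alternating_binomial_sum_Suc:
  fixes f :: "nat \<Rightarrow> real"
  shows "(\<Sum>m\<le>Suc N. real (Suc N choose m) * (-1)^m * f m) =
    (\<Sum>m\<le>N. real (N choose m) * (-1)^m * f m) - (\<Sum>m\<le>N. real (N choose m) * (-1)^m * f (Suc m))"
proof -
  have "(\<Sum>m\<le>Suc N. real (Suc N choose m) * (-1)^m * f m) =
      f 0 + (\<Sum>m\<le>N. real (Suc N choose Suc m) * (-1)^Suc m * f (Suc m))"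
    by (subst sum.atMost_Suc_shift) simp
  also have "\<dots> = f 0 - (\<Sum>m<N. real (N choose Suc m) * (-1)^m * f (Suc m))
      - (\<Sum>m\<le>N. real (N choose m) * (-1)^m * f (Suc m))"
    by (simp add: sum.distrib sum_subtractf algebra_simps sum_negf lessThan_Suc_atMost[symmetric])
  also have "f 0 - (\<Sum>m<N. real (N choose Suc m) * (-1)^m * f (Suc m)) =
      (\<Sum>m\<le>N. real (N choose m) * (-1)^m * f m)"
    by (subst sum.atMost_shift) (simp add: sum_negf)
  finally show ?thesis .
qed

lemma alternating_binomial_sum_power:
  fixes x z :: real
  assumes "j \<le> N"
  shows "(\<Sum>m\<le>N. real (N choose m) * (-1)^m * (x + z * real m)^j) =
    (if j = N then (-1)^N * fact N * z^N else 0)"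
  using assms
proof (induction N arbitrary: j)
  case 0
  then show ?case by simp
next
  case (Suc N)
  define D where "D i = (\<Sum>m\<le>N. real (N choose m) * (-1)^m * (x + z * real m)^i)" for i
  have "(\<Sum>m\<le>N. real (N choose m) * (-1)^m * (x + z * real (Suc m))^j) =
      (\<Sum>m\<le>N. real (N choose m) * (-1)^m *
        (\<Sum>i\<le>j. real (j choose i) * (x + z * real m)^i * z^(j - i)))"
  proof (intro sum.cong refl)
    fix m
    have "(x + z * real (Suc m))^j = ((x + z * real m) + z)^j"
      by (simp add: algebra_simps)
    then show "real (N choose m) * (-1)^m * (x + z * real (Suc m))^j =
        real (N choose m) * (-1)^m * (\<Sum>i\<le>j. real (j choose i) * (x + z * real m)^i * z^(j - i))"
      by (simp add: binomial_ring)
  qed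
  also have "\<dots> = (\<Sum>i\<le>j. real (j choose i) * z^(j - i) * D i)"
    unfolding D_def by (simp add: sum_distrib_left sum_distrib_right mult_ac sum.swap[of _ "{..j}"])
  finally have shift: "(\<Sum>m\<le>N. real (N choose m) * (-1)^m * (x + z * real (Suc m))^j) =
      D j + (\<Sum>i<j. real (j choose i) * z^(j - i) * D i)"
    by (simp add: lessThan_Suc_atMost[symmetric])
  have "(\<Sum>m\<le>Suc N. real (Suc N choose m) * (-1)^m * (x + z * real m)^j) =
      - (\<Sum>i<j. real (j choose i) * z^(j - i) * D i)"
    using alternating_binomial_sum_Suc[of N "\<lambda>m. (x + z * real m)^j"] shift
    unfolding D_def by simp
  also have "\<dots> = (if j = Suc N then (-1)^Suc N * fact (Suc N) * z^Suc N else 0)"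
  proof (cases "j = Suc N")
    case True
    then have "(\<Sum>i<j. real (j choose i) * z^(j - i) * D i) = real (Suc N) * z * D N"
      using Suc.IH unfolding D_def by (simp add: lessThan_Suc_atMost[symmetric])
    then show ?thesis
      using True Suc.IH unfolding D_def by (simp add: algebra_simps)
  next
    case False
    then have "(\<Sum>i<j. real (j choose i) * z^(j - i) * D i) = 0"
      using Suc.IH Suc.prems unfolding D_def by (intro sum.neutral) auto
    then show ?thesis
      using False by simp
  qed
  finally show ?case .
qed

definition abel_sum :: "real \<Rightarrow> nat \<Rightarrow> real \<Rightarrow> real \<Rightarrow> real" where
  "abel_sum z N a b =
    (\<Sum>m\<le>N. real (N choose m) * (a + z * real m)^m * (b + z * real (N - m))^(N - m))"

definition falling_power_sum :: "(nat \<Rightarrow> real) \<Rightarrow> real \<Rightarrow> nat \<Rightarrow> real \<Rightarrow> real" where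
  "falling_power_sum c z N s = (\<Sum>l\<le>N. c l * falling_fact N l * z^l * (s + real N * z)^(N - l))"

lemma DERIV_mult_power_add:
  fixes c d :: real
  shows "DERIV (\<lambda>x. c * (x + d)^e) x :> c * (real e * (x + d)^(e - 1))"
  by (auto intro!: derivative_eq_intros)

lemma abel_sum_deriv:
  "DERIV (abel_sum z (Suc N) a) b :> real (Suc N) * abel_sum z N a (b + z)"
proof -
  have deriv: "DERIV (abel_sum z (Suc N) a) b :>
      (\<Sum>m\<le>Suc N. real (Suc N choose m) * (a + z * real m)^m *
        (real (Suc N - m) * (b + z * real (Suc N - m))^(Suc N - m - 1)))"
    unfolding abel_sum_def by (intro DERIV_sum DERIV_mult_power_add)
  have "(\<Sum>m\<le>Suc N. real (Suc N choose m) * (a + z * real m)^m *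
        (real (Suc N - m) * (b + z * real (Suc N - m))^(Suc N - m - 1))) =
      (\<Sum>m\<le>N. real (Suc N choose m) * (a + z * real m)^m *
        (real (Suc N - m) * (b + z * real (Suc N - m))^(Suc N - m - 1)))"
    by simp
  also have "\<dots> = (\<Sum>m\<le>N. real (Suc N) * (real (N choose m) * (a + z * real m)^m *
        ((b + z) + z * real (N - m))^(N - m)))"
  proof (intro sum.cong refl)
    fix m assume "m \<in> {..N}"
    then have "b + z * real (Suc N - m) = (b + z) + z * real (N - m)" "Suc N - m - 1 = N - m"
      by (simp_all add: Suc_diff_le algebra_simps)
    then have "real (Suc N choose m) * (a + z * real m)^m *
        (real (Suc N - m) * (b + z * real (Suc N - m))^(Suc N - m - 1)) =
      (a + z * real m)^m * ((b + z) + z * real (N - m))^(N - m) *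
        (real (Suc N choose m) * real (Suc N - m))"
      by (simp only: ac_simps)
    also have "real (Suc N choose m) * real (Suc N - m) = real (Suc N) * real (N choose m)"
      using binomial_absorb_comp[of "Suc N" m]
      by (simp only: diff_Suc_1 mult.commute flip: of_nat_mult)
    finally show "real (Suc N choose m) * (a + z * real m)^m *
        (real (Suc N - m) * (b + z * real (Suc N - m))^(Suc N - m - 1)) =
      real (Suc N) * (real (N choose m) * (a + z * real m)^m * ((b + z) + z * real (N - m))^(N - m))"
      by (simp only: ac_simps)
  qed
  also have "\<dots> = real (Suc N) * abel_sum z N a (b + z)"
    by (simp add: abel_sum_def sum_distrib_left)
  finally show ?thesis
    using deriv by simp
qed

lemma falling_power_sum_deriv:
  "DERIV (falling_power_sum c z (Suc N)) s :> real (Suc N) * falling_power_sum c z N (s + z)"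
proof -
  have deriv: "DERIV (falling_power_sum c z (Suc N)) s :>
      (\<Sum>l\<le>Suc N. c l * falling_fact (Suc N) l * z^l *
        (real (Suc N - l) * (s + real (Suc N) * z)^(Suc N - l - 1)))"
    unfolding falling_power_sum_def by (intro DERIV_sum DERIV_mult_power_add)
  have "(\<Sum>l\<le>Suc N. c l * falling_fact (Suc N) l * z^l *
        (real (Suc N - l) * (s + real (Suc N) * z)^(Suc N - l - 1))) =
      (\<Sum>l\<le>N. c l * falling_fact (Suc N) l * z^l *
        (real (Suc N - l) * (s + real (Suc N) * z)^(Suc N - l - 1)))"
    by simp
  also have "\<dots> =
      (\<Sum>l\<le>N. real (Suc N) * (c l * falling_fact N l * z^l * ((s + z) + real N * z)^(N - l)))"
  proof (intro sum.cong refl)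
    fix l assume "l \<in> {..N}"
    then have ff: "falling_fact (Suc N) l * real (Suc N - l) = real (Suc N) * falling_fact N l"
      by (intro falling_fact_Suc) simp
    have "s + real (Suc N) * z = (s + z) + real N * z" "Suc N - l - 1 = N - l"
      by (simp_all add: algebra_simps)
    then have "c l * falling_fact (Suc N) l * z^l *
          (real (Suc N - l) * (s + real (Suc N) * z)^(Suc N - l - 1)) =
        c l * z^l * ((s + z) + real N * z)^(N - l) * (falling_fact (Suc N) l * real (Suc N - l))"
      by (simp only: ac_simps)
    also have "\<dots> = real (Suc N) * (c l * falling_fact N l * z^l * ((s + z) + real N * z)^(N - l))"
      unfolding ff by (simp only: ac_simps)
    finally show "c l * falling_fact (Suc N) l * z^l *
        (real (Suc N - l) * (s + real (Suc N) * z)^(Suc N - l - 1)) =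
      real (Suc N) * (c l * falling_fact N l * z^l * ((s + z) + real N * z)^(N - l))" .
  qed
  also have "\<dots> = real (Suc N) * falling_power_sum c z N (s + z)"
    by (simp add: falling_power_sum_def sum_distrib_left)
  finally show ?thesis
    using deriv by simp
qed

lemma abel_sum_base: "abel_sum z N a (- a - z * real N) = fact N * z^N"
proof -
  have "abel_sum z N a (- a - z * real N) =
      (-1)^N * (\<Sum>m\<le>N. real (N choose m) * (-1)^m * (a + z * real m)^N)"
    unfolding abel_sum_def sum_distrib_left
  proof (intro sum.cong refl)
    fix m assume m: "m \<in> {..N}"
    then have shift: "- a - z * real N + z * real (N - m) = - (a + z * real m)"
      by (simp add: of_nat_diff algebra_simps)
    have sign: "(-1::real)^(N - m) = (-1)^N * (-1)^m"
      using m by (simp add: power_diff minus_one_power_iff)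
    have pow: "(a + z * real m)^m * (a + z * real m)^(N - m) = (a + z * real m)^N"
      using m by (simp flip: power_add)
    have "real (N choose m) * (a + z * real m)^m * ((-1)^N * (-1)^m * (a + z * real m)^(N - m)) =
        (-1)^N * (real (N choose m) * (-1)^m * ((a + z * real m)^m * (a + z * real m)^(N - m)))"
      by (simp only: ac_simps)
    then show "real (N choose m) * (a + z * real m)^m * (- a - z * real N + z * real (N - m))^(N - m) =
        (-1)^N * (real (N choose m) * (-1)^m * (a + z * real m)^N)"
      unfolding shift power_minus[of "a + z * real m"] sign pow by simp
  qed
  also have "\<dots> = fact N * z^N"
    by (simp add: alternating_binomial_sum_power flip: power_mult_distrib)
  finally show ?thesis .
qed

lemma falling_power_sum_base: "falling_power_sum c z N (- z * real N) = c N * fact N * z^N"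
proof -
  have "falling_power_sum c z N (- z * real N) = (\<Sum>l\<le>N. if l = N then c N * fact N * z^N else 0)"
    unfolding falling_power_sum_def by (intro sum.cong refl) (auto simp: falling_fact_def)
  then show ?thesis
    by simp
qed

text \<open>By induction on N, both sides have the same derivative in b, and they
  agree at b = -a - zN, where the left side becomes an N-th finite difference.\<close>
lemma abel_identity: "abel_sum z N a b = falling_power_sum (\<lambda>_. 1) z N (a + b)"
proof (induction N arbitrary: a b)
  case 0
  then show ?case
    by (simp add: abel_sum_def falling_power_sum_def falling_fact_def)
next
  case (Suc N)
  define F where "F b = abel_sum z (Suc N) a b - falling_power_sum (\<lambda>_. 1) z (Suc N) (a + b)" for b
  have "\<forall>b. DERIV F b :> 0"
  proof
    fix b
    have "DERIV F b :> real (Suc N) * abel_sum z N a (b + z) -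
        real (Suc N) * falling_power_sum (\<lambda>_. 1) z N (a + b + z) * 1"
      unfolding F_def
      by (intro DERIV_diff abel_sum_deriv DERIV_chain2[OF falling_power_sum_deriv])
        (auto intro!: derivative_eq_intros)
    then show "DERIV F b :> 0"
      using Suc.IH[of a "b + z"] by (simp add: add.assoc)
  qed
  then have "F b = F (- a - z * real (Suc N))"
    by (rule DERIV_isconst_all)
  also have "\<dots> = 0"
    unfolding F_def using abel_sum_base[of z "Suc N" a] falling_power_sum_base[of "\<lambda>_. 1" z "Suc N"]
    by simp
  finally show ?case
    unfolding F_def by simp
qed

subsection \<open>Abel's multinomial identity\<close>

lemma sum_triangle_shift:
  fixes h :: "nat \<Rightarrow> nat \<Rightarrow> 'a::comm_monoid_add"
  shows "(\<Sum>j\<le>n. \<Sum>l\<le>n - j. h j (j + l)) = (\<Sum>s\<le>n. \<Sum>j\<le>s. h j s)"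
proof -
  have "(\<Sum>j\<le>n. \<Sum>l\<le>n - j. h j (j + l)) = (\<Sum>(j, l)\<in>{(i, j). i + j \<le> n}. h j (j + l))"
    by (subst sum.Sigma) (auto intro!: sum.cong)
  also have "\<dots> = (\<Sum>s\<le>n. \<Sum>j\<le>s. h j (j + (s - j)))"
    by (rule sum.triangle_reindex_eq)
  finally show ?thesis
    by simp
qed

lemma sum_binomial_mult_falling_power_sum:
  "(\<Sum>m\<le>n. real (n choose m) * (a + z * real m)^m * falling_power_sum c z (n - m) b) =
    (\<Sum>j\<le>n. c j * falling_fact n j * z^j * abel_sum z (n - j) a (b + real j * z))"
proof -
  define u where "u m = (a + z * real m)^m" for m
  have "(\<Sum>m\<le>n. real (n choose m) * u m * falling_power_sum c z (n - m) b) =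
      (\<Sum>m\<le>n. \<Sum>j\<le>n. c j * z^j *
        (real (n choose m) * falling_fact (n - m) j * u m * (b + real (n - m) * z)^(n - m - j)))"
  proof (intro sum.cong refl)
    fix m
    have "falling_power_sum c z (n - m) b =
        (\<Sum>j\<le>n. c j * falling_fact (n - m) j * z^j * (b + real (n - m) * z)^(n - m - j))"
      unfolding falling_power_sum_def by (rule sum.mono_neutral_left) (auto simp: falling_fact_def)
    then show "real (n choose m) * u m * falling_power_sum c z (n - m) b =
        (\<Sum>j\<le>n. c j * z^j *
          (real (n choose m) * falling_fact (n - m) j * u m * (b + real (n - m) * z)^(n - m - j)))"
      by (simp add: sum_distrib_left mult_ac)
  qed
  also have "\<dots> = (\<Sum>j\<le>n. c j * z^j * (\<Sum>m\<le>n.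
      real (n choose m) * falling_fact (n - m) j * u m * (b + real (n - m) * z)^(n - m - j)))"
    by (subst sum.swap) (simp add: sum_distrib_left)
  also have "\<dots> = (\<Sum>j\<le>n. c j * falling_fact n j * z^j * abel_sum z (n - j) a (b + real j * z))"
  proof (intro sum.cong refl)
    fix j assume j: "j \<in> {..n}"
    have "(\<Sum>m\<le>n. real (n choose m) * falling_fact (n - m) j * u m * (b + real (n - m) * z)^(n - m - j)) =
        (\<Sum>m\<le>n. falling_fact n j *
          (real ((n - j) choose m) * u m * ((b + real j * z) + z * real (n - j - m))^(n - j - m)))"
    proof (intro sum.cong refl)
      fix m assume m: "m \<in> {..n}"
      show "real (n choose m) * falling_fact (n - m) j * u m * (b + real (n - m) * z)^(n - m - j) =
          falling_fact n j *
            (real ((n - j) choose m) * u m * ((b + real j * z) + z * real (n - j - m))^(n - j - m))"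
      proof (cases "m \<le> n - j")
        case True
        then have "b + real (n - m) * z = (b + real j * z) + z * real (n - j - m)" "n - m - j = n - j - m"
          using j by (simp_all add: of_nat_diff algebra_simps)
        then show ?thesis
          using binomial_mult_falling_fact[of m n j] m j by (simp only:) simp
      next
        case False
        then have "\<not> j \<le> n - m"
          using m j by auto
        then show ?thesis
          using False by (simp add: falling_fact_def)
      qed
    qed
    also have "\<dots> = falling_fact n j * abel_sum z (n - j) a (b + real j * z)"
      unfolding abel_sum_def u_def sum_distrib_left[symmetric]
      by (intro arg_cong[where f = "(*) _"] sum.mono_neutral_right) auto
    finally show "c j * z^j * (\<Sum>m\<le>n.
        real (n choose m) * falling_fact (n - m) j * u m * (b + real (n - m) * z)^(n - m - j)) =
      c j * falling_fact n j * z^j * abel_sum z (n - j) a (b + real j * z)"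
      by simp
  qed
  finally show ?thesis
    unfolding u_def .
qed

lemma abel_convolution:
  "(\<Sum>m\<le>n. real (n choose m) * (a + z * real m)^m * falling_power_sum c z (n - m) b) =
    falling_power_sum (\<lambda>s. \<Sum>j\<le>s. c j) z n (a + b)"
proof -
  define S where "S = a + b + real n * z"
  have "(\<Sum>m\<le>n. real (n choose m) * (a + z * real m)^m * falling_power_sum c z (n - m) b) =
      (\<Sum>j\<le>n. c j * falling_fact n j * z^j * falling_power_sum (\<lambda>_. 1) z (n - j) (a + (b + real j * z)))"
    by (simp add: sum_binomial_mult_falling_power_sum abel_identity)
  also have "\<dots> = (\<Sum>j\<le>n. \<Sum>l\<le>n - j. c j * falling_fact n (j + l) * z^(j + l) * S^(n - (j + l)))"
  proof (intro sum.cong refl)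
    fix j assume "j \<in> {..n}"
    then have S: "a + (b + real j * z) + real (n - j) * z = S"
      and ff: "falling_fact n j * falling_fact (n - j) l = falling_fact n (j + l)" for l
      by (simp_all add: S_def of_nat_diff algebra_simps falling_fact_add)
    show "c j * falling_fact n j * z^j * falling_power_sum (\<lambda>_. 1) z (n - j) (a + (b + real j * z)) =
        (\<Sum>l\<le>n - j. c j * falling_fact n (j + l) * z^(j + l) * S^(n - (j + l)))"
      unfolding falling_power_sum_def sum_distrib_left S
      by (intro sum.cong refl) (simp add: power_add diff_diff_add mult_ac flip: ff)
  qed
  also have "\<dots> = (\<Sum>s\<le>n. \<Sum>j\<le>s. c j * falling_fact n s * z^s * S^(n - s))"
    by (rule sum_triangle_shift)
  also have "\<dots> = falling_power_sum (\<lambda>s. \<Sum>j\<le>s. c j) z n (a + b)"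
    unfolding falling_power_sum_def S_def by (simp add: sum_distrib_right)
  finally show ?thesis .
qed

lemma finite_count_vectors: "finite (count_vectors n k)"
proof -
  have "count_vectors n k \<subseteq> {x. \<forall>i. (i \<in> {1..k} \<longrightarrow> x i \<in> {..n}) \<and> (i \<notin> {1..k} \<longrightarrow> x i = 0)}"
  proof
    fix x assume x: "x \<in> count_vectors n k"
    have "x i \<le> n" if "i \<in> {1..k}" for i
    proof -
      have "x i \<le> (\<Sum>i=1..k. x i)"
        using that by (intro member_le_sum) auto
      then show ?thesis
        using x by (simp add: count_vectors_def)
    qed
    then show "x \<in> {x. \<forall>i. (i \<in> {1..k} \<longrightarrow> x i \<in> {..n}) \<and> (i \<notin> {1..k} \<longrightarrow> x i = 0)}"
      using x by (auto simp: count_vectors_def)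
  qed
  moreover have "finite {x. \<forall>i. (i \<in> {1..k} \<longrightarrow> x i \<in> {..n}) \<and> (i \<notin> {1..k} \<longrightarrow> (x i :: nat) = 0)}"
    by (rule finite_set_of_finite_funs) auto
  ultimately show ?thesis
    by (rule finite_subset)
qed

lemma count_vectors_0: "count_vectors n 0 = (if n = 0 then {\<lambda>_. 0} else {})"
  by (auto simp: count_vectors_def)

lemma sum_count_vectors_Suc:
  "(\<Sum>y\<in>count_vectors n (Suc k). f y) = (\<Sum>m\<le>n. \<Sum>x\<in>count_vectors (n - m) k. f (x(Suc k := m)))"
proof -
  have "(\<Sum>m\<le>n. \<Sum>x\<in>count_vectors (n - m) k. f (x(Suc k := m))) =
      (\<Sum>(m, x)\<in>Sigma {..n} (\<lambda>m. count_vectors (n - m) k). f (x(Suc k := m)))"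
    by (rule sum.Sigma) (auto simp: finite_count_vectors)
  moreover have "(\<Sum>y\<in>count_vectors n (Suc k). f y) = \<dots>"
  proof (rule sum.reindex_bij_witness[where j = "\<lambda>y. (y (Suc k), y(Suc k := 0))"
        and i = "\<lambda>(m, x). x(Suc k := m)"])
    fix y assume y: "y \<in> count_vectors n (Suc k)"
    have "(\<Sum>i=1..k. (y(Suc k := 0)) i) = (\<Sum>i=1..k. y i)"
      by (intro sum.cong) auto
    then show "(y (Suc k), y(Suc k := 0)) \<in> Sigma {..n} (\<lambda>m. count_vectors (n - m) k)"
      using y by (auto simp: count_vectors_def)
  next
    fix p assume p: "p \<in> Sigma {..n} (\<lambda>m. count_vectors (n - m) k)"
    then obtain m x where p_eq: "p = (m, x)" and "m \<le> n" and x: "x \<in> count_vectors (n - m) k"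
      by auto
    moreover have "(\<Sum>i=1..k. (x(Suc k := m)) i) = (\<Sum>i=1..k. x i)"
      by (intro sum.cong) auto
    moreover have "x(Suc k := 0) = x"
      using x by (auto simp: count_vectors_def)
    ultimately show "(case p of (m, x) \<Rightarrow> x(Suc k := m)) \<in> count_vectors n (Suc k)"
      and "(case (case p of (m, x) \<Rightarrow> x(Suc k := m)) of y \<Rightarrow> (y (Suc k), y(Suc k := 0))) = p"
      by (auto simp: count_vectors_def)
  qed auto
  ultimately show ?thesis
    by simp
qed

definition abel_multinomial_sum :: "nat \<Rightarrow> nat \<Rightarrow> (nat \<Rightarrow> real) \<Rightarrow> real \<Rightarrow> real" where
  "abel_multinomial_sum n k a z = (\<Sum>x\<in>count_vectors n k.
    fact n / (\<Prod>i=1..k. fact (x i)) * (\<Prod>i=1..k. (a i + z * real (x i))^(x i)))"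

lemma abel_multinomial_sum_0: "abel_multinomial_sum n 0 a z = (if n = 0 then 1 else 0)"
  by (simp add: abel_multinomial_sum_def count_vectors_0)

lemma abel_multinomial_sum_Suc:
  "abel_multinomial_sum n (Suc k) a z =
    (\<Sum>m\<le>n. real (n choose m) * (a (Suc k) + z * real m)^m * abel_multinomial_sum (n - m) k a z)"
proof -
  have split: "fact n / (\<Prod>i=1..Suc k. fact ((x(Suc k := m)) i)) *
      (\<Prod>i=1..Suc k. (a i + z * real ((x(Suc k := m)) i))^((x(Suc k := m)) i)) =
    real (n choose m) * (a (Suc k) + z * real m)^m *
      (fact (n - m) / (\<Prod>i=1..k. fact (x i)) * (\<Prod>i=1..k. (a i + z * real (x i))^(x i)))"
    if "m \<le> n" for m and x :: "nat \<Rightarrow> nat"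
  proof -
    have "(\<Prod>i=1..k. fact (x i)) > (0::real)"
      by (intro prod_pos) auto
    moreover have "real (n choose m) = fact n / (fact m * fact (n - m))"
      using binomial_fact[OF that] by simp
    ultimately show ?thesis
      by (simp add: prod.cl_ivl_Suc field_simps)
  qed
  have "abel_multinomial_sum n (Suc k) a z = (\<Sum>m\<le>n. \<Sum>x\<in>count_vectors (n - m) k.
      real (n choose m) * (a (Suc k) + z * real m)^m *
        (fact (n - m) / (\<Prod>i=1..k. fact (x i)) * (\<Prod>i=1..k. (a i + z * real (x i))^(x i))))"
    unfolding abel_multinomial_sum_def sum_count_vectors_Suc
    by (intro sum.cong refl split) simp
  then show ?thesis
    by (simp add: abel_multinomial_sum_def sum_distrib_left)
qed

lemma sum_choose_lower_shift: "(\<Sum>j\<le>s. real ((j + d - 1) choose j)) = real ((s + d) choose s)"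
proof (cases d)
  case 0
  then have "(\<Sum>j\<le>s. real ((j + d - 1) choose j)) = (\<Sum>j\<le>s. if j = 0 then 1 else 0)"
    by (intro sum.cong refl) auto
  then show ?thesis
    using 0 by simp
next
  case (Suc r)
  then show ?thesis
    using sum_choose_lower[of r s] by (simp add: add.commute flip: of_nat_sum)
qed

text \<open>By truncated subtraction, the coefficient for d = 0 is the indicator of j = 0.\<close>
lemma abel_multinomial_identity:
  "abel_multinomial_sum n (Suc d) a z =
    falling_power_sum (\<lambda>j. real ((j + d - 1) choose j)) z n (\<Sum>i=1..Suc d. a i)"
proof (induction d arbitrary: n)
  case 0
  have "abel_multinomial_sum n 1 a z = (a 1 + z * real n)^n"
    by (simp add: abel_multinomial_sum_Suc abel_multinomial_sum_0 if_distrib sum.delta cong: if_cong)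
  also have "\<dots> = falling_power_sum (\<lambda>j. real ((j - 1) choose j)) z n (a 1)"
    unfolding falling_power_sum_def
    by (subst sum.atMost_shift) (simp add: falling_fact_def binomial_eq_0 mult.commute)
  finally show ?case
    by simp
next
  case (Suc d)
  have "abel_multinomial_sum n (Suc (Suc d)) a z =
      (\<Sum>m\<le>n. real (n choose m) * (a (Suc (Suc d)) + z * real m)^m *
        falling_power_sum (\<lambda>j. real ((j + d - 1) choose j)) z (n - m) (\<Sum>i=1..Suc d. a i))"
    by (simp only: abel_multinomial_sum_Suc[of n "Suc d"] Suc.IH)
  also have "\<dots> = falling_power_sum (\<lambda>s. \<Sum>j\<le>s. real ((j + d - 1) choose j)) z n
      (a (Suc (Suc d)) + (\<Sum>i=1..Suc d. a i))"
    by (rule abel_convolution)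
  also have "\<dots> =
      falling_power_sum (\<lambda>j. real ((j + Suc d - 1) choose j)) z n (\<Sum>i=1..Suc (Suc d). a i)"
    by (simp only: sum_choose_lower_shift) (simp add: add.commute)
  finally show ?case .
qed

subsection \<open>The exponential moment of V\<close>

lemma falling_power_sum_le:
  assumes "\<forall>j. 0 \<le> c j" and "0 \<le> z" and "s + real n * z = 1"
  shows "falling_power_sum c z n s \<le> (\<Sum>j\<le>n. c j * (real n * z)^j)"
  unfolding falling_power_sum_def assms(3)
proof (rule sum_mono)
  fix j
  have "falling_fact n j * z^j \<le> real n ^ j * z^j"
    using assms(2) by (intro mult_right_mono falling_fact_le_power) auto
  then show "c j * falling_fact n j * z^j * 1^(n - j) \<le> c j * (real n * z)^j"
    using assms(1) by (simp add: mult.assoc mult_left_mono power_mult_distrib)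
qed

lemma sum_choose_power_telescope:
  fixes t :: real
  shows "(1 - t) * (\<Sum>j\<le>N. real ((j + Suc d - 1) choose j) * t^j) +
      real ((N + d) choose N) * t^Suc N =
    (\<Sum>j\<le>N. real ((j + d - 1) choose j) * t^j)"
proof (induction N)
  case 0
  then show ?case
    by (simp add: algebra_simps)
next
  case (Suc N)
  have "(Suc N + d) choose Suc N = ((N + d) choose N) + ((N + d) choose Suc N)"
    by simp
  then show ?case
    using Suc.IH by (simp add: algebra_simps)
qed

lemma sum_choose_power_le:
  fixes t :: real
  assumes "0 \<le> t" and "t < 1"
  shows "(\<Sum>j\<le>N. real ((j + d - 1) choose j) * t^j) \<le> 1 / (1 - t)^d"
proof (induction d)
  case 0
  have "(\<Sum>j\<le>N. real ((j + 0 - 1) choose j) * t^j) = (\<Sum>j\<le>N. if j = 0 then 1 else 0)"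
    by (intro sum.cong refl) auto
  then show ?case
    by simp
next
  case (Suc d)
  have "(1 - t) * (\<Sum>j\<le>N. real ((j + Suc d - 1) choose j) * t^j) \<le>
      (\<Sum>j\<le>N. real ((j + d - 1) choose j) * t^j)"
  proof -
    have "0 \<le> real ((N + d) choose N) * t^Suc N"
      using assms by simp
    then show ?thesis
      using sum_choose_power_telescope[where t = t and N = N and d = d] by linarith
  qed
  also have "\<dots> \<le> 1 / (1 - t)^d"
    by (rule Suc.IH)
  finally show ?case
    using assms by (simp add: field_simps)
qed

lemma weighted_geometric_mean_le:
  fixes p q t :: real
  assumes "0 \<le> t" "t \<le> 1" "0 \<le> p" "0 < q"
  shows "p * exp (t * ln (q / p)) \<le> (1 - t) * p + t * q"
proof (cases "p = 0")
  case False
  with assms have "p > 0"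
    by simp
  then have "p * exp (t * ln (q / p)) = exp (ln p) * exp (t * (ln q - ln p))"
    using assms by (simp add: ln_div)
  also have "\<dots> = exp ((1 - t) * ln p + t * ln q)"
    by (simp add: algebra_simps flip: exp_add)
  also have "\<dots> = q powr t * p powr (1 - t)"
    using \<open>p > 0\<close> assms by (simp add: powr_def exp_add mult_ac)
  also have "\<dots> \<le> t * q + (1 - t) * p"
    using Youngs_inequality_0[of t "1 - t" q p] \<open>p > 0\<close> assms by simp
  finally show ?thesis
    by simp
qed (use assms in simp)

lemma multinomial_pmf_nonneg:
  "\<forall>i\<in>{1..k}. p i \<ge> 0 \<Longrightarrow> multinomial_pmf n k p x \<ge> 0"
  unfolding multinomial_pmf_def by (intro mult_nonneg_nonneg divide_nonneg_nonneg prod_nonneg) auto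

lemma multinomial_pmf_mult_exp_V_le:
  assumes "n \<ge> 1" and p: "\<forall>i\<in>{1..k}. p i \<ge> 0" and t: "0 \<le> t" "t \<le> 1"
  shows "multinomial_pmf n k p x * exp (t * real n * V_stat n k p x) \<le>
    fact n / (\<Prod>i=1..k. fact (x i)) * (\<Prod>i=1..k. ((1 - t) * p i + t / real n * real (x i))^(x i))"
proof -
  define q where "q i = real (x i) / real n" for i
  define e where "e i = (if q i = 0 then 0 else t * real n * (q i * ln (q i / p i)))" for i
  have "exp (t * real n * V_stat n k p x) = (\<Prod>i=1..k. exp (e i))"
    unfolding V_stat_def KL_div_def q_def e_def sum_distrib_left exp_sum[OF finite_atLeastAtMost]
    by (intro prod.cong) auto
  then have "multinomial_pmf n k p x * exp (t * real n * V_stat n k p x) =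
      fact n / (\<Prod>i=1..k. fact (x i)) * (\<Prod>i=1..k. p i ^ x i * exp (e i))"
    by (simp add: multinomial_pmf_def prod.distrib)
  also have "\<dots> \<le> fact n / (\<Prod>i=1..k. fact (x i)) * (\<Prod>i=1..k. ((1 - t) * p i + t / real n * real (x i))^(x i))"
  proof (intro mult_left_mono prod_mono conjI)
    fix i assume i: "i \<in> {1..k}"
    show "0 \<le> p i ^ x i * exp (e i)"
      using p i by simp
    show "p i ^ x i * exp (e i) \<le> ((1 - t) * p i + t / real n * real (x i))^(x i)"
    proof (cases "x i = 0")
      case False
      then have "q i > 0" and tq: "t * q i = t / real n * real (x i)"
        using \<open>n \<ge> 1\<close> by (simp_all add: q_def)
      have "e i = real (x i) * (t * ln (q i / p i))"
        using \<open>n \<ge> 1\<close> \<open>q i > 0\<close> by (simp add: e_def q_def)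
      then have "p i ^ x i * exp (e i) = (p i * exp (t * ln (q i / p i)))^(x i)"
        by (simp add: exp_of_nat_mult power_mult_distrib)
      also have "\<dots> \<le> ((1 - t) * p i + t * q i)^(x i)"
        using p i t \<open>q i > 0\<close> by (intro power_mono weighted_geometric_mean_le) auto
      finally show ?thesis
        unfolding tq .
    qed (simp add: e_def q_def)
  qed (intro divide_nonneg_nonneg prod_nonneg fact_ge_zero)
  finally show ?thesis .
qed

lemma prob_V_ge_le_exp_moment:
  assumes "0 \<le> t" and "\<forall>i\<in>{1..k}. p i \<ge> 0"
  shows "prob_V_ge n k p eps \<le> exp (- t * real n * eps) *
    (\<Sum>x\<in>count_vectors n k. multinomial_pmf n k p x * exp (t * real n * V_stat n k p x))"
  unfolding prob_V_ge_def sum_distrib_left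
proof (rule sum_mono)
  fix x
  have pmf: "multinomial_pmf n k p x \<ge> 0"
    using assms(2) by (rule multinomial_pmf_nonneg)
  have "exp (- t * real n * eps) * (multinomial_pmf n k p x * exp (t * real n * V_stat n k p x)) =
      multinomial_pmf n k p x * exp (t * real n * (V_stat n k p x - eps))"
    by (simp add: algebra_simps flip: exp_add)
  moreover have "multinomial_pmf n k p x \<le> multinomial_pmf n k p x * exp (t * real n * (V_stat n k p x - eps))"
    if "eps \<le> V_stat n k p x"
    using mult_left_mono[of 1 "exp (t * real n * (V_stat n k p x - eps))", OF _ pmf] that assms(1)
    by simp
  ultimately show "(if eps \<le> V_stat n k p x then multinomial_pmf n k p x else 0) \<le>
      exp (- t * real n * eps) * (multinomial_pmf n k p x * exp (t * real n * V_stat n k p x))"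
    using pmf by (simp only:) simp
qed

lemma exp_moment_V_le:
  assumes n: "n \<ge> 1" and k: "k \<ge> 1" and p: "\<forall>i\<in>{1..k}. p i \<ge> 0" "(\<Sum>i=1..k. p i) = 1"
    and t: "0 \<le> t" "t < 1"
  shows "(\<Sum>x\<in>count_vectors n k. multinomial_pmf n k p x * exp (t * real n * V_stat n k p x))
    \<le> 1 / (1 - t)^(k - 1)"
proof -
  obtain d where d: "k = Suc d"
    using k by (cases k) auto
  define a where "a i = (1 - t) * p i" for i
  have "(\<Sum>x\<in>count_vectors n k. multinomial_pmf n k p x * exp (t * real n * V_stat n k p x))
      \<le> abel_multinomial_sum n k a (t / real n)"
    unfolding abel_multinomial_sum_def a_def
    using multinomial_pmf_mult_exp_V_le[OF n p(1)] t by (intro sum_mono) auto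
  also have "\<dots> = falling_power_sum (\<lambda>j. real ((j + d - 1) choose j)) (t / real n) n (\<Sum>i=1..k. a i)"
    unfolding d by (rule abel_multinomial_identity)
  also have "\<dots> \<le> (\<Sum>j\<le>n. real ((j + d - 1) choose j) * (real n * (t / real n))^j)"
    using n t p(2) by (intro falling_power_sum_le) (auto simp: a_def simp flip: sum_distrib_left)
  also have "real n * (t / real n) = t"
    using n by simp
  also have "(\<Sum>j\<le>n. real ((j + d - 1) choose j) * t^j) \<le> 1 / (1 - t)^d"
    using t by (rule sum_choose_power_le)
  finally show ?thesis
    by (simp add: d)
qed

lemma optimize_exp_div_power_bound:
  fixes P x :: real and d :: nat
  assumes "0 < d" and "real d < x"
    and bound: "\<And>t. 0 \<le> t \<Longrightarrow> t < 1 \<Longrightarrow> P \<le> exp (- t * x) / (1 - t)^d"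
  shows "P \<le> exp (- x) * (exp 1 * x / real d)^d"
proof -
  define t where "t = 1 - real d / x"
  have "x > 0"
    using assms(2) by linarith
  then have "0 \<le> t" "t < 1" and "1 - t = real d / x"
    using assms(1,2) by (simp_all add: t_def)
  have "- t * x = - x + real d * 1"
    using \<open>x > 0\<close> by (simp add: t_def algebra_simps)
  then have "exp (- t * x) = exp (- x) * exp 1 ^ d"
    by (simp only: exp_add exp_of_nat_mult)
  with \<open>1 - t = real d / x\<close> have "exp (- t * x) / (1 - t)^d = exp (- x) * (exp 1 * x / real d)^d"
    by (simp add: power_divide power_mult_distrib)
  with bound[OF \<open>0 \<le> t\<close> \<open>t < 1\<close>] show ?thesis
    by simp
qed

theorem theorem1p2:
  fixes n k :: nat and p :: "nat \<Rightarrow> real" and eps :: real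
  assumes "n \<ge> 1" and "k \<ge> 2"
    and "\<forall>i\<in>{1..k}. p i \<ge> 0" and "(\<Sum>i=1..k. p i) = 1"
    and "eps > (real k - 1) / real n"
  shows "prob_V_ge n k p eps \<le>
           exp (- real n * eps) * (exp 1 * eps * real n / (real k - 1)) ^ (k - 1)"
proof -
  have "prob_V_ge n k p eps \<le> exp (- t * (real n * eps)) / (1 - t)^(k - 1)"
    if "0 \<le> t" "t < 1" for t
  proof -
    have "prob_V_ge n k p eps \<le> exp (- t * real n * eps) *
        (\<Sum>x\<in>count_vectors n k. multinomial_pmf n k p x * exp (t * real n * V_stat n k p x))"
      using that(1) assms(3) by (rule prob_V_ge_le_exp_moment)
    also have "\<dots> \<le> exp (- t * real n * eps) * (1 / (1 - t)^(k - 1))"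
      using assms that by (intro mult_left_mono exp_moment_V_le) auto
    finally show ?thesis
      by (simp add: mult.assoc)
  qed
  moreover have "real (k - 1) < real n * eps"
    using assms(1,2,5) by (simp add: of_nat_diff field_simps)
  ultimately have "prob_V_ge n k p eps \<le>
      exp (- (real n * eps)) * (exp 1 * (real n * eps) / real (k - 1))^(k - 1)"
    using assms(2) by (intro optimize_exp_div_power_bound) auto
  then show ?thesis
    using assms(2) by (simp add: of_nat_diff mult_ac)
qed

end
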